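(* Let $\mathcal C=\{c_1,\ldots,c_m\}$ and $n\ge 1$. Suppose the manipulator has no information, i.e. the information set is $E=\mathcal F_n$, the set of all $n$-profiles of linear orders on $\mathcal C$. Then the Borda rule (with ties broken in the order $c_1\succ c_2\succ\cdots\succ c_m$) is immune to dominating manipulation: for every linear order $V_M$ on $\mathcal C$, no linear order $U$ on $\mathcal C$ dominates $V_M$.
   Context: Borda: each vote gives $m-i$ points to the alternative in its $i$-th position; the alternative with the highest total score wins, ties broken in favor of the alternative with the smallest index. There are $n$ non-manipulators and one manipulator with true preferences $V_M$ (a linear order). Given an information set $E$ (a set of $n$-profiles of the non-manipulators), a vote $U$ dominates a vote $V$ if for every $P\in E$, $r(P\cup\{U\})$ is ranked weakly above $r(P\cup\{V\})$ in $V_M$, and for some $P'\in E$, $r(P'\cup\{U\})$ is ranked strictly above $r(P'\cup\{V\})$ in $V_M$. Immunity means that for every $V_M$ no vote dominates $V_M$. *)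

theory Defs
  imports Main
begin

text \<open>Candidates c_1,...,c_m are encoded as the naturals 0,...,m-1 (c_{i+1} is i).
A vote (linear order on the candidates) is a list listing all candidates exactly once,
most preferred first.\<close>

definition linorder_vote :: "nat \<Rightarrow> nat list \<Rightarrow> bool" where
  "linorder_vote m v \<longleftrightarrow> distinct v \<and> set v = {0..<m}"

fun pos :: "nat list \<Rightarrow> nat \<Rightarrow> nat" where
  "pos [] c = 0"
| "pos (x # xs) c = (if x = c then 0 else Suc (pos xs c))"

text \<open>Borda: the candidate in (0-based) position i receives m-1-i points,
i.e. m-i points for 1-based position i.\<close>
definition borda_score :: "nat \<Rightarrow> nat list list \<Rightarrow> nat \<Rightarrow> nat" where
  "borda_score m P c = (\<Sum>v\<leftarrow>P. m - 1 - pos v c)"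

definition borda_winner :: "nat \<Rightarrow> nat list list \<Rightarrow> nat" where
  "borda_winner m P =
     (LEAST c. c < m \<and> (\<forall>d<m. borda_score m P d \<le> borda_score m P c))"

definition all_profiles :: "nat \<Rightarrow> nat \<Rightarrow> nat list list set" where
  "all_profiles m n = {P. length P = n \<and> (\<forall>v\<in>set P. linorder_vote m v)}"

text \<open>U dominates V for a manipulator with true preference VM and information set E.
r(P \<union> {U}) is the winner on the (n+1)-profile U # P; "ranked weakly above in VM"
means having smaller-or-equal position in VM.\<close>
definition dominates ::
  "nat \<Rightarrow> nat list list set \<Rightarrow> nat list \<Rightarrow> nat list \<Rightarrow> nat list \<Rightarrow> bool" where
  "dominates m E VM U V \<longleftrightarrow>
     (\<forall>P\<in>E. pos VM (borda_winner m (U # P)) \<le> pos VM (borda_winner m (V # P))) \<and>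
     (\<exists>P\<in>E. pos VM (borda_winner m (U # P)) < pos VM (borda_winner m (V # P)))"

end

theory Submission
  imports Defs
begin

text \<open>Maximising the Borda score amounts to minimising the total position, and a pair of
votes \<open>v, rev v\<close> adds \<open>m - 1\<close> to every candidate's total, so such pairs can pad any
profile without changing the winner. Let \<open>k\<close> be the first position at which the sincere
vote \<open>V\<^sub>M\<close> and the insincere vote \<open>U\<close> differ, \<open>a\<close> and \<open>b\<close> their entries there. The vote
\<open>w\<close> that puts \<open>a\<close> and \<open>b\<close> on top and then ranks the other candidates in the reverse of
\<open>V\<^sub>M\<close> gives each candidate of the common prefix total \<open>m - 1\<close>. For odd \<open>n\<close> the profile
\<open>w\<close> (plus pairs) makes \<open>V\<^sub>M\<close> elect a candidate of the prefix or \<open>a\<close>, but \<open>U\<close> elect \<open>b\<close>;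
the order of \<open>a\<close> and \<open>b\<close> in \<open>w\<close> is chosen according to the tie-breaking. For even \<open>n\<close>
the profile \<open>w, rev V\<^sub>M\<close> makes \<open>V\<^sub>M\<close> elect \<open>a\<close> and \<open>U\<close> elect a candidate that \<open>V\<^sub>M\<close>
ranks below position \<open>k\<close>.\<close>

lemma pos_less_length: "c \<in> set xs \<Longrightarrow> pos xs c < length xs"
  by (induction xs) auto

lemma pos_notin: "c \<notin> set xs \<Longrightarrow> pos xs c = length xs"
  by (induction xs) auto

lemma nth_pos: "c \<in> set xs \<Longrightarrow> xs ! pos xs c = c"
  by (induction xs) auto

lemma pos_nth: "distinct xs \<Longrightarrow> i < length xs \<Longrightarrow> pos xs (xs ! i) = i"
proof (induction xs arbitrary: i)
  case (Cons x xs)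
  then show ?case by (cases i) auto
qed simp

lemma pos_rev:
  assumes "distinct xs" "c \<in> set xs"
  shows "pos (rev xs) c = length xs - 1 - pos xs c"
proof -
  define i where "i = length xs - 1 - pos xs c"
  have "pos xs c < length xs" using assms(2) by (rule pos_less_length)
  then have "rev xs ! i = c" using nth_pos[OF assms(2)] by (simp add: i_def rev_nth)
  moreover have "i < length xs" using \<open>pos xs c < length xs\<close> by (simp add: i_def)
  ultimately show ?thesis using pos_nth[of "rev xs" i] assms(1) by (simp add: i_def)
qed

lemma pos_take_eq: "take k xs = take k ys \<Longrightarrow> pos xs c < k \<Longrightarrow> pos ys c = pos xs c"
proof (induction k arbitrary: xs ys)
  case (Suc k)
  show ?case
  proof (cases xs)
    case Nil
    with Suc.prems show ?thesis by simp
  next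
    case (Cons x xs')
    with Suc.prems obtain ys' where "ys = x # ys'" "take k xs' = take k ys'"
      by (cases ys) auto
    with Cons Suc.prems Suc.IH[of xs' ys'] show ?thesis by (auto split: if_splits)
  qed
qed simp

lemma pos_filter:
  "P c \<Longrightarrow> (\<And>z. pos xs z < pos xs c \<Longrightarrow> P z) \<Longrightarrow> pos (filter P xs) c = pos xs c"
proof (induction xs)
  case (Cons x xs)
  then show ?case by (fastforce split: if_splits)
qed simp

lemma linorder_vote_length: "linorder_vote m v \<Longrightarrow> length v = m"
  unfolding linorder_vote_def using distinct_card by fastforce

lemma linorder_vote_pos_less: "linorder_vote m v \<Longrightarrow> c < m \<Longrightarrow> pos v c < m"
  using pos_less_length linorder_vote_length unfolding linorder_vote_def by fastforce

lemma linorder_vote_rev: "linorder_vote m v \<Longrightarrow> linorder_vote m (rev v)"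
  unfolding linorder_vote_def by simp

definition reverse_with_top :: "nat \<Rightarrow> nat \<Rightarrow> nat list \<Rightarrow> nat list" where
  "reverse_with_top x y v = x # y # rev (filter (\<lambda>c. c \<notin> {x, y}) v)"

lemma linorder_vote_reverse_with_top:
  assumes "linorder_vote m v" "x < m" "y < m" "x \<noteq> y"
  shows "linorder_vote m (reverse_with_top x y v)"
proof -
  have "set (reverse_with_top x y v) = {x, y} \<union> (set v - {x, y})"
    by (auto simp: reverse_with_top_def)
  also have "\<dots> = {0..<m}" using assms(1-3) unfolding linorder_vote_def by (simp add: insert_absorb)
  finally show ?thesis
    using assms(1,4) unfolding linorder_vote_def by (simp add: reverse_with_top_def)
qed

lemma pos_reverse_with_top:
  assumes "distinct v" "d \<in> set v" "x \<in> set v" "y \<in> set v" "x \<noteq> y"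
    and "pos v d < pos v x" "pos v d < pos v y"
  shows "pos (reverse_with_top x y v) d + pos v d = length v - 1"
proof -
  define F where "F = filter (\<lambda>c. c \<notin> {x, y}) v"
  have "d \<notin> {x, y}" using assms(6,7) by auto
  then have "d \<in> set F" using assms(2) by (simp add: F_def)
  have "pos F d = pos v d"
    unfolding F_def using \<open>d \<notin> {x, y}\<close> assms(6,7) by (intro pos_filter) auto
  have "length F = card (set v - {x, y})"
    using assms(1) distinct_card[of F] by (simp add: F_def set_diff_eq)
  also have "\<dots> = length v - 2"
    using assms(1,3,4,5) by (simp add: card_Diff_subset distinct_card)
  finally have "length F = length v - 2" .
  have "distinct F" using assms(1) by (simp add: F_def)
  have "pos (reverse_with_top x y v) d = 2 + (length F - 1 - pos F d)"
    using \<open>d \<notin> {x, y}\<close> pos_rev[OF \<open>distinct F\<close> \<open>d \<in> set F\<close>]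
    by (simp add: reverse_with_top_def F_def)
  moreover have "pos F d < length F" using \<open>d \<in> set F\<close> by (rule pos_less_length)
  ultimately show ?thesis using \<open>pos F d = pos v d\<close> \<open>length F = length v - 2\<close> by simp
qed

definition pos_sum :: "nat list list \<Rightarrow> nat \<Rightarrow> nat" where
  "pos_sum P c = (\<Sum>v\<leftarrow>P. pos v c)"

lemma pos_sum_simps [simp]:
  "pos_sum [] c = 0"
  "pos_sum (v # P) c = pos v c + pos_sum P c"
  "pos_sum (P @ Q) c = pos_sum P c + pos_sum Q c"
  by (simp_all add: pos_sum_def)

lemma borda_score_add_pos_sum:
  "\<forall>v\<in>set P. linorder_vote m v \<Longrightarrow> c < m \<Longrightarrow>
    borda_score m P c + pos_sum P c = length P * (m - 1)"
proof (induction P)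
  case (Cons v P)
  then have "pos v c < m" by (simp add: linorder_vote_pos_less)
  with Cons show ?case by (auto simp: borda_score_def)
qed (simp add: borda_score_def)

lemma borda_winner_conv_pos_sum:
  assumes "\<forall>v\<in>set P. linorder_vote m v"
  shows "borda_winner m P = (LEAST c. c < m \<and> (\<forall>d<m. pos_sum P c \<le> pos_sum P d))"
proof -
  have "borda_score m P d \<le> borda_score m P c \<longleftrightarrow> pos_sum P c \<le> pos_sum P d"
    if "c < m" "d < m" for c d
    using borda_score_add_pos_sum[OF assms that(1)] borda_score_add_pos_sum[OF assms that(2)]
    by linarith
  then show ?thesis unfolding borda_winner_def by (metis (lifting))
qed

lemma borda_winner_cong_pos_sum:
  assumes "\<forall>v\<in>set P. linorder_vote m v" "\<forall>v\<in>set Q. linorder_vote m v"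
    and "\<And>d. d < m \<Longrightarrow> pos_sum P d = pos_sum Q d + C"
  shows "borda_winner m P = borda_winner m Q"
proof -
  have "(c < m \<and> (\<forall>d<m. pos_sum P c \<le> pos_sum P d)) \<longleftrightarrow>
        (c < m \<and> (\<forall>d<m. pos_sum Q c \<le> pos_sum Q d))" for c
    using assms(3) by auto
  then show ?thesis by (simp add: borda_winner_conv_pos_sum assms(1,2))
qed

lemma borda_winner_minimal:
  assumes "\<forall>v\<in>set P. linorder_vote m v" "0 < m"
  shows "borda_winner m P < m" "d < m \<Longrightarrow> pos_sum P (borda_winner m P) \<le> pos_sum P d"
proof -
  obtain c where "c < m \<and> (\<forall>d<m. pos_sum P c \<le> pos_sum P d)"
    using ex_has_least_nat[of "\<lambda>c. c < m" 0 "pos_sum P"] assms(2) by blast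
  then have "borda_winner m P < m \<and> (\<forall>d<m. pos_sum P (borda_winner m P) \<le> pos_sum P d)"
    unfolding borda_winner_conv_pos_sum[OF assms(1)] by (rule LeastI)
  then show "borda_winner m P < m" "d < m \<Longrightarrow> pos_sum P (borda_winner m P) \<le> pos_sum P d"
    by auto
qed

lemma borda_winner_eqI:
  assumes "\<forall>v\<in>set P. linorder_vote m v" "c < m"
    and "\<And>d. d < m \<Longrightarrow> pos_sum P c \<le> pos_sum P d"
    and "\<And>d. d < m \<Longrightarrow> pos_sum P d \<le> pos_sum P c \<Longrightarrow> c \<le> d"
  shows "borda_winner m P = c"
  unfolding borda_winner_conv_pos_sum[OF assms(1)]
  using assms(2-4) by (intro Least_equality) auto

lemma borda_winner_neq:
  assumes "\<forall>v\<in>set P. linorder_vote m v" "d < m" "d < c" "pos_sum P d \<le> pos_sum P c"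
  shows "borda_winner m P \<noteq> c"
proof
  assume c: "borda_winner m P = c"
  then have "c < m \<and> (\<forall>e<m. pos_sum P c \<le> pos_sum P e)"
    using borda_winner_minimal[OF assms(1)] assms(2) by auto
  then have "d < m \<and> (\<forall>e<m. pos_sum P d \<le> pos_sum P e)" using assms(2,4) by auto
  then have "borda_winner m P \<le> d"
    unfolding borda_winner_conv_pos_sum[OF assms(1)] by (rule Least_le)
  with c assms(3) show False by simp
qed

lemma linorder_vote_pos_rev: "linorder_vote m v \<Longrightarrow> c < m \<Longrightarrow> pos (rev v) c = m - 1 - pos v c"
  using pos_rev linorder_vote_length unfolding linorder_vote_def by fastforce

lemma pos_sum_rev_pair: "linorder_vote m v \<Longrightarrow> c < m \<Longrightarrow> pos_sum [v, rev v] c = m - 1"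
  using linorder_vote_pos_rev linorder_vote_pos_less by fastforce

lemma borda_winner_append_rev_pairs:
  assumes "\<forall>v\<in>set P. linorder_vote m v" "linorder_vote m v"
  shows "borda_winner m (P @ concat (replicate j [v, rev v])) = borda_winner m P"
proof (rule borda_winner_cong_pos_sum)
  show "\<forall>u\<in>set (P @ concat (replicate j [v, rev v])). linorder_vote m u"
    using assms linorder_vote_rev by auto
  show "pos_sum (P @ concat (replicate j [v, rev v])) d = pos_sum P d + j * (m - 1)"
    if "d < m" for d
    using pos_sum_rev_pair[OF assms(2) that] by (induction j) auto
qed (use assms in auto)

locale first_disagreement =
  fixes m :: nat and V U :: "nat list" and k a b :: nat
  assumes vote_V: "linorder_vote m V" and vote_U: "linorder_vote m U"
    and k_less: "k < m" and same_prefix: "take k V = take k U"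
    and nth_V: "V ! k = a" and nth_U: "U ! k = b" and a_neq_b: "a \<noteq> b"

lemma first_disagreement_exists:
  assumes "linorder_vote m V" "linorder_vote m U" "U \<noteq> V"
  shows "\<exists>k. first_disagreement m V U k (V ! k) (U ! k)"
proof -
  have len: "length V = m" "length U = m" using assms(1,2) by (simp_all add: linorder_vote_length)
  have ex: "\<exists>i. i < m \<and> V ! i \<noteq> U ! i"
    using assms(3) len nth_equalityI by metis
  define k where "k = (LEAST i. i < m \<and> V ! i \<noteq> U ! i)"
  have k: "k < m" "V ! k \<noteq> U ! k" using LeastI_ex[OF ex] by (simp_all add: k_def)
  have "V ! i = U ! i" if "i < k" for i
    using not_less_Least[of i "\<lambda>i. i < m \<and> V ! i \<noteq> U ! i"] that k(1) by (simp add: k_def)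
  then have "take k V = take k U" using k(1) len by (intro nth_equalityI) auto
  with k assms(1,2) have "first_disagreement m V U k (V ! k) (U ! k)"
    by unfold_locales auto
  then show ?thesis ..
qed

context first_disagreement
begin

lemma swap: "first_disagreement m U V k b a"
  by (rule first_disagreement.intro)
    (use vote_V vote_U k_less same_prefix nth_V nth_U a_neq_b in auto)

lemma a_less: "a < m"
proof -
  have "a \<in> set V" using nth_V k_less linorder_vote_length[OF vote_V] nth_mem by metis
  then show ?thesis using vote_V unfolding linorder_vote_def by simp
qed

lemma pos_V_a: "pos V a = k"
  using pos_nth[of V k] vote_V k_less nth_V linorder_vote_length[OF vote_V]
  unfolding linorder_vote_def by simp

lemma pos_U_eq_pos_V: "pos V d < k \<Longrightarrow> pos U d = pos V d"
  using same_prefix by (rule pos_take_eq)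

lemma b_less: "b < m" and pos_U_b: "pos U b = k"
  using first_disagreement.a_less[OF swap] first_disagreement.pos_V_a[OF swap] by simp_all

lemma candidate_cases:
  assumes "d < m"
  obtains (prefix) "pos V d < k" "pos U d = pos V d"
    | (a) "d = a" | (b) "d = b"
    | (suffix) "k < pos V d" "k < pos U d" "d \<noteq> a" "d \<noteq> b"
proof (cases "pos V d < k")
  case True
  then show ?thesis using prefix pos_U_eq_pos_V by blast
next
  case False
  show ?thesis
  proof (cases "d = a \<or> d = b")
    case True
    then show ?thesis using a b by blast
  next
    case ab: False
    have "d \<in> set V" "d \<in> set U"
      using assms vote_V vote_U unfolding linorder_vote_def by simp_all
    have "pos V d \<noteq> k" using ab nth_pos[OF \<open>d \<in> set V\<close>] nth_V by auto
    moreover have "pos U d \<noteq> k" using ab nth_pos[OF \<open>d \<in> set U\<close>] nth_U by auto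
    moreover have "\<not> pos U d < k"
      using False first_disagreement.pos_U_eq_pos_V[OF swap] by fastforce
    ultimately show ?thesis using False ab suffix by simp
  qed
qed

lemma k_less_pos_V_b: "k < pos V b"
proof -
  have "b \<in> set V" using b_less vote_V unfolding linorder_vote_def by simp
  then have "pos V b \<noteq> k" using nth_pos nth_V a_neq_b by metis
  moreover have "\<not> pos V b < k" using pos_U_eq_pos_V pos_U_b by fastforce
  ultimately show ?thesis by simp
qed

lemma Suc_k_less: "Suc k < m"
  using k_less_pos_V_b linorder_vote_pos_less[OF vote_V b_less] by simp

lemma k_less_pos_U_a: "k < pos U a"
  using first_disagreement.k_less_pos_V_b[OF swap] .

lemma prefix_pos_reverse_with_top:
  assumes "{x, y} = {a, b}" "pos V d < k"
  shows "pos (reverse_with_top x y V) d + pos V d = m - 1"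
proof -
  have "distinct V" "length V = m" "set V = {0..<m}"
    using vote_V linorder_vote_length unfolding linorder_vote_def by simp_all
  have "d \<in> set V" using assms(2) k_less pos_notin \<open>length V = m\<close> by fastforce
  have xy: "x = a \<and> y = b \<or> x = b \<and> y = a" using assms(1) by (simp add: doubleton_eq_iff)
  have "pos V d < pos V a" "pos V d < pos V b" using assms(2) pos_V_a k_less_pos_V_b by simp_all
  then show ?thesis
    using xy a_less b_less a_neq_b \<open>d \<in> set V\<close> \<open>distinct V\<close> \<open>set V = {0..<m}\<close> \<open>length V = m\<close>
      pos_reverse_with_top[of V d x y] by auto
qed

lemma linorder_vote_reverse_with_top_ab:
  "{x, y} = {a, b} \<Longrightarrow> linorder_vote m (reverse_with_top x y V)"
  using a_less b_less a_neq_b vote_V linorder_vote_reverse_with_top[of m V x y]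
  by (auto simp: doubleton_eq_iff)

lemma borda_winner_pair_top:
  assumes w: "linorder_vote m w" and "pos w a = 0"
    and w_prefix: "\<And>d. pos V d < k \<Longrightarrow> pos w d + pos V d = m - 1"
  shows "borda_winner m [V, w] = a"
proof -
  have above: "k < pos_sum [V, w] d" if "d < m" "d \<noteq> a" for d
    using that(1)
  proof (cases rule: candidate_cases)
    case prefix
    then show ?thesis using w_prefix[OF prefix(1)] Suc_k_less by simp
  next
    case b
    then show ?thesis using k_less_pos_V_b by simp
  qed (use that in simp_all)
  have "pos_sum [V, w] a = k" using pos_V_a assms(2) by simp
  show ?thesis
  proof (rule borda_winner_eqI)
    show "pos_sum [V, w] a \<le> pos_sum [V, w] d" if "d < m" for d
      using above[OF that] \<open>pos_sum [V, w] a = k\<close> by (cases "d = a") auto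
    show "a \<le> d" if "d < m" "pos_sum [V, w] d \<le> pos_sum [V, w] a" for d
      using above[of d] that \<open>pos_sum [V, w] a = k\<close> by force
  qed (use vote_V w a_less in auto)
qed

lemma witness_single_vote:
  "\<exists>w. linorder_vote m w \<and> pos V (borda_winner m [V, w]) < pos V (borda_winner m [U, w])"
proof (cases "a < b \<or> (m = k + 2 \<and> (\<exists>d. pos V d < k \<and> d < b))")
  \<comment> \<open>whether, with \<open>b\<close> put first, some candidate of smaller index than \<open>b\<close> ties with it\<close>
  case True
  define w where "w = reverse_with_top b a V"
  have w: "linorder_vote m w"
    using linorder_vote_reverse_with_top_ab by (simp add: w_def insert_commute)
  have w_prefix: "pos w d + pos V d = m - 1" if "pos V d < k" for d
    using prefix_pos_reverse_with_top[of b a] that by (simp add: w_def insert_commute)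
  have U_winner: "borda_winner m [U, w] = b"
  proof (rule first_disagreement.borda_winner_pair_top[OF swap w])
    show "pos w b = 0" by (simp add: w_def reverse_with_top_def)
    show "pos w d + pos U d = m - 1" if "pos U d < k" for d
      using that w_prefix[of d] first_disagreement.pos_U_eq_pos_V[OF swap, of d] by simp
  qed
  define c where "c = borda_winner m [V, w]"
  have votes: "\<forall>v\<in>set [V, w]. linorder_vote m v" using vote_V w by simp
  have "c < m" "pos_sum [V, w] c \<le> pos_sum [V, w] a"
    using borda_winner_minimal[OF votes] a_less unfolding c_def by auto
  moreover have "pos_sum [V, w] a = k + 1"
    using pos_V_a a_neq_b by (simp add: w_def reverse_with_top_def)
  moreover have "c \<noteq> b"
  proof -
    have b_sum: "k + 1 \<le> pos_sum [V, w] b" using k_less_pos_V_b by simp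
    from True consider "a < b" | d where "pos V d < k" "d < b" "m = k + 2" by blast
    then show ?thesis
    proof cases
      case 1
      then show ?thesis
        using borda_winner_neq[OF votes a_less] b_sum \<open>pos_sum [V, w] a = k + 1\<close>
        unfolding c_def by simp
    next
      case 2
      then show ?thesis
        using borda_winner_neq[OF votes, of d b] b_sum w_prefix[of d] b_less
        unfolding c_def by simp
    qed
  qed
  ultimately have "pos V c \<le> k"
  proof (cases rule: candidate_cases)
    case suffix
    then have "2 \<le> pos w c" by (simp add: w_def reverse_with_top_def)
    with suffix \<open>pos_sum [V, w] c \<le> pos_sum [V, w] a\<close> \<open>pos_sum [V, w] a = k + 1\<close>
    show ?thesis by simp
  qed (simp_all add: pos_V_a)
  then show ?thesis using w U_winner k_less_pos_V_b unfolding c_def by auto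
next
  case False
  then have "b < a" and ties: "\<And>d. m = k + 2 \<Longrightarrow> pos V d < k \<Longrightarrow> b \<le> d"
    using a_neq_b by auto
  define w where "w = reverse_with_top a b V"
  have w: "linorder_vote m w" using linorder_vote_reverse_with_top_ab by (simp add: w_def)
  have w_prefix: "pos w d + pos V d = m - 1" if "pos V d < k" for d
    using prefix_pos_reverse_with_top[of a b] that by (simp add: w_def)
  have V_winner: "borda_winner m [V, w] = a"
    using w w_prefix by (intro borda_winner_pair_top) (simp_all add: w_def reverse_with_top_def)
  have U_sum: "k + 1 \<le> pos_sum [U, w] d \<and> (pos_sum [U, w] d = k + 1 \<longrightarrow> b \<le> d)"
    if "d < m" for d
    using that
  proof (cases rule: candidate_cases)
    case prefix
    then show ?thesis using w_prefix[of d] Suc_k_less ties[of d] by simp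
  next
    case a
    then show ?thesis using k_less_pos_U_a \<open>b < a\<close> by (simp add: w_def reverse_with_top_def)
  next
    case b
    then show ?thesis using pos_U_b a_neq_b by (simp add: w_def reverse_with_top_def)
  next
    case suffix
    then show ?thesis by (simp add: w_def reverse_with_top_def)
  qed
  have "pos_sum [U, w] b = k + 1" using pos_U_b a_neq_b by (simp add: w_def reverse_with_top_def)
  have U_winner: "borda_winner m [U, w] = b"
  proof (rule borda_winner_eqI)
    show "pos_sum [U, w] b \<le> pos_sum [U, w] d" if "d < m" for d
      using U_sum[OF that] \<open>pos_sum [U, w] b = k + 1\<close> by simp
    show "b \<le> d" if "d < m" "pos_sum [U, w] d \<le> pos_sum [U, w] b" for d
      using U_sum[OF that(1)] that(2) \<open>pos_sum [U, w] b = k + 1\<close> by simp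
  qed (use vote_U w b_less in auto)
  show ?thesis using w V_winner U_winner pos_V_a k_less_pos_V_b by auto
qed

lemma witness_vote_and_reverse:
  "\<exists>w. linorder_vote m w \<and>
     pos V (borda_winner m [V, w, rev V]) < pos V (borda_winner m [U, w, rev V])"
proof -
  define w where "w = reverse_with_top a b V"
  have w: "linorder_vote m w" using linorder_vote_reverse_with_top_ab by (simp add: w_def)
  have w_top: "pos w d = 0 \<longleftrightarrow> d = a" for d by (auto simp: w_def reverse_with_top_def)
  have rev_V: "pos (rev V) d = m - 1 - pos V d" if "d < m" for d
    using linorder_vote_pos_rev[OF vote_V that] .
  have "pos_sum [V, w, rev V] d = pos_sum [w] d + (m - 1)" if "d < m" for d
    using pos_sum_rev_pair[OF vote_V that] by simp
  then have "borda_winner m [V, w, rev V] = borda_winner m [w]"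
    by (rule borda_winner_cong_pos_sum[rotated 2])
      (use vote_V w linorder_vote_rev[OF vote_V] in auto)
  also have "\<dots> = a"
  proof (rule borda_winner_eqI)
    show "a \<le> d" if "pos_sum [w] d \<le> pos_sum [w] a" for d
      using that w_top[of d] w_top[of a] by simp
  qed (use w a_less w_top[of a] in simp_all)
  finally have V_winner: "borda_winner m [V, w, rev V] = a" .
  define c where "c = borda_winner m [U, w, rev V]"
  have votes: "\<forall>v\<in>set [U, w, rev V]. linorder_vote m v"
    using vote_U w linorder_vote_rev[OF vote_V] by simp
  have "c < m" "pos_sum [U, w, rev V] c \<le> pos_sum [U, w, rev V] b"
    using borda_winner_minimal[OF votes] b_less unfolding c_def by auto
  moreover have "pos_sum [U, w, rev V] b \<le> m - 1"
    using pos_U_b rev_V[OF b_less] k_less_pos_V_b w_top[of b] a_neq_b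
      linorder_vote_pos_less[OF vote_V b_less] by (simp add: w_def reverse_with_top_def)
  ultimately have "k < pos V c"
  proof (cases rule: candidate_cases)
    case prefix
    moreover have "c \<noteq> a" using prefix pos_V_a by auto
    ultimately show ?thesis
      using \<open>pos_sum [U, w, rev V] c \<le> pos_sum [U, w, rev V] b\<close> \<open>pos_sum [U, w, rev V] b \<le> m - 1\<close>
        rev_V[OF \<open>c < m\<close>] w_top[of c] k_less by simp
  next
    case a
    then show ?thesis
      using \<open>pos_sum [U, w, rev V] c \<le> pos_sum [U, w, rev V] b\<close> \<open>pos_sum [U, w, rev V] b \<le> m - 1\<close>
        rev_V[OF a_less] pos_V_a k_less_pos_U_a k_less by simp
  qed (simp_all add: k_less_pos_V_b)
  then show ?thesis using w V_winner pos_V_a unfolding c_def by auto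
qed

lemma witness_profile:
  assumes "1 \<le> n"
  shows "\<exists>P\<in>all_profiles m n. pos V (borda_winner m (V # P)) < pos V (borda_winner m (U # P))"
proof -
  obtain Q where Q: "\<forall>v\<in>set Q. linorder_vote m v" "length Q \<le> n" "even (n - length Q)"
    and better: "pos V (borda_winner m (V # Q)) < pos V (borda_winner m (U # Q))"
  proof (cases "odd n")
    case True
    with witness_single_vote assms that[of "[_]"] show ?thesis by fastforce
  next
    case False
    with witness_vote_and_reverse assms linorder_vote_rev[OF vote_V] that[of "[_, rev V]"] show ?thesis
      by fastforce
  qed
  define P where "P = Q @ concat (replicate ((n - length Q) div 2) [V, rev V])"
  have "length (concat (replicate j [V, rev V])) = 2 * j" for j by (induction j) auto
  then have "length P = n" using Q(2,3) by (simp add: P_def)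
  then have "P \<in> all_profiles m n"
    using Q(1) vote_V linorder_vote_rev[OF vote_V] by (auto simp: P_def all_profiles_def)
  moreover have "borda_winner m (X # P) = borda_winner m (X # Q)" if "linorder_vote m X" for X
    using borda_winner_append_rev_pairs[of "X # Q" m V] that Q(1) vote_V by (simp add: P_def)
  ultimately show ?thesis using better vote_V vote_U by (intro bexI[of _ P]) simp_all
qed

end

theorem theorem2:
  fixes m n :: nat and VM U :: "nat list"
  assumes "n \<ge> 1"
    and "linorder_vote m VM"
    and "linorder_vote m U"
  shows "\<not> dominates m (all_profiles m n) VM U VM"
proof
  assume dom: "dominates m (all_profiles m n) VM U VM"
  then have "U \<noteq> VM" unfolding dominates_def by auto
  then obtain k where "first_disagreement m VM U k (VM ! k) (U ! k)"
    using first_disagreement_exists assms(2,3) by blast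
  then obtain P where "P \<in> all_profiles m n"
    and "pos VM (borda_winner m (VM # P)) < pos VM (borda_winner m (U # P))"
    using first_disagreement.witness_profile assms(1) by blast
  with dom show False unfolding dominates_def by fastforce
qed

end
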